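(* Let $\Sigma$ be a set of prime numbers, $S$ the multiplicative submonoid of $\mathbb{N}$ generated by $\Sigma$, $\mathbb{Z}[S^{-1}]\subset\mathbb{Q}$ the localization. Let $M$ be a locally compact topological $\mathbb{Z}[S^{-1}]$-module whose underlying group is $(M,+)=\mathbb{R}^n\times H$ for some $n\ge0$ and some locally compact abelian group $H$ containing a compact open subgroup. Then $\mathbb{R}^n\times 0$ is a (closed) $\mathbb{Z}[S^{-1}]$-submodule of $M$; in particular $H$ is also a $\mathbb{Z}[S^{-1}]$-module, as a quotient of $M$.
   Context: All topological groups are Hausdorff; $\mathbb{Z}[S^{-1}]$ is discrete and a locally compact topological $\mathbb{Z}[S^{-1}]$-module is a locally compact abelian group with a $\mathbb{Z}[S^{-1}]$-module structure with continuous scalar multiplication. *)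

theory Defs
  imports "HOL-Analysis.Analysis"
begin

inductive_set gen_monoid :: "nat set \<Rightarrow> nat set" for \<Sigma> :: "nat set" where
  one: "1 \<in> gen_monoid \<Sigma>"
| mult: "p \<in> \<Sigma> \<Longrightarrow> s \<in> gen_monoid \<Sigma> \<Longrightarrow> p * s \<in> gen_monoid \<Sigma>"

definition localization :: "nat set \<Rightarrow> rat set" where
  "localization S = {q. \<exists>a::int. \<exists>s\<in>S. q = of_int a / of_nat s}"

text \<open>A Z[S^-1]-module structure (scalar multiplication restricted to the ring R)
  on an abelian group, with continuous scalar multiplication (R discrete).\<close>
definition top_module :: "rat set \<Rightarrow> (rat \<Rightarrow> 'm::{topological_space,ab_group_add} \<Rightarrow> 'm) \<Rightarrow> bool" where
  "top_module R smul \<longleftrightarrow>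
     (\<forall>q\<in>R. \<forall>x y. smul q (x + y) = smul q x + smul q y) \<and>
     (\<forall>q\<in>R. \<forall>r\<in>R. \<forall>x. smul (q + r) x = smul q x + smul r x) \<and>
     (\<forall>q\<in>R. \<forall>r\<in>R. \<forall>x. smul (q * r) x = smul q (smul r x)) \<and>
     (\<forall>x. smul 1 x = x) \<and>
     (\<forall>q\<in>R. continuous_on UNIV (smul q))"

end

theory Submission
  imports Defs
begin

text \<open>No topology is needed: \<open>\<real>\<^sup>n \<times> 0\<close> is a divisible subgroup, and a divisible subgroup
  is stable under \<open>\<int>[S\<^sup>-\<^sup>1]\<close>.  Indeed, writing \<open>q = a/s\<close> and \<open>x = s \<cdot> y\<close> inside the
  subgroup, \<open>q \<cdot> x = (q s) \<cdot> y = a \<cdot> y\<close> is an integer multiple of \<open>y\<close>.  By additivity,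
  \<open>q \<cdot> x\<close> and \<open>q \<cdot> y\<close> then differ by an element of \<open>\<real>\<^sup>n \<times> 0\<close> whenever \<open>x\<close> and \<open>y\<close> do,
  so \<open>H\<close> inherits the module structure.\<close>

lemma of_int_in_localization:
  assumes "1 \<in> S"
  shows "of_int a \<in> localization S"
  unfolding localization_def using assms by force

lemma of_nat_in_localization:
  assumes "1 \<in> S"
  shows "of_nat n \<in> localization S"
  using of_int_in_localization[OF assms, of "int n"] by simp

lemma top_module_smul_add:
  assumes "top_module R smul" "q \<in> R"
  shows "smul q (x + y) = smul q x + smul q y"
  using assms unfolding top_module_def by blast

lemma top_module_add_smul:
  assumes "top_module R smul" "q \<in> R" "r \<in> R"
  shows "smul (q + r) x = smul q x + smul r x"
  using assms unfolding top_module_def by blast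

lemma top_module_smul_smul:
  assumes "top_module R smul" "q \<in> R" "r \<in> R"
  shows "smul q (smul r x) = smul (q * r) x"
  using assms unfolding top_module_def by metis

lemma top_module_one_smul:
  assumes "top_module R smul"
  shows "smul 1 x = x"
  using assms unfolding top_module_def by blast

lemma top_module_smul_diff:
  assumes "top_module R smul" "q \<in> R"
  shows "smul q (x - y) = smul q x - smul q y"
  using top_module_smul_add[OF assms, of "x - y" y] by (simp add: eq_diff_eq)

lemma top_module_zero_smul:
  assumes "top_module R smul" "0 \<in> R"
  shows "smul 0 x = 0"
  using top_module_add_smul[OF assms assms(2), of x] by simp

lemma top_module_smul_of_nat:
  assumes "top_module R smul" "\<And>n. of_nat n \<in> R"
  shows "smul (of_nat n) x = (\<Sum>i<n. x)"
proof (induction n)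
  case 0
  show ?case using top_module_zero_smul[OF assms(1)] assms(2)[of 0] by simp
next
  case (Suc n)
  have "smul (of_nat n + 1) x = smul (of_nat n) x + smul 1 x"
    using top_module_add_smul[OF assms(1) assms(2)[of n]] assms(2)[of 1] by simp
  then show ?case using Suc top_module_one_smul[OF assms(1)] by (simp add: add.commute)
qed

lemma top_module_smul_of_int_mem_subgroup:
  assumes tm: "top_module R smul" and int: "\<And>k. of_int k \<in> R"
    and zero: "0 \<in> A" and add: "\<And>x y. x \<in> A \<Longrightarrow> y \<in> A \<Longrightarrow> x + y \<in> A"
    and uminus: "\<And>x. x \<in> A \<Longrightarrow> - x \<in> A" and "x \<in> A"
  shows "smul (of_int k) x \<in> A"
proof (induction k rule: int_induct[where k = 0])
  case base
  show ?case using top_module_zero_smul[OF tm] int[of 0] zero by simp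
next
  case (step1 i)
  have "smul (of_int (i + 1)) x = smul (of_int i) x + x"
    using top_module_add_smul[OF tm int[of i] int[of 1], of x] top_module_one_smul[OF tm] by simp
  then show ?case using step1 add \<open>x \<in> A\<close> by simp
next
  case (step2 i)
  have "smul (of_int i) x = smul (of_int (i - 1)) x + x"
    using top_module_add_smul[OF tm int[of "i - 1"] int[of 1], of x] top_module_one_smul[OF tm]
    by simp
  moreover have "smul (of_int i) x + - x \<in> A"
    using step2 add uminus \<open>x \<in> A\<close> by blast
  ultimately show ?case by (simp add: eq_diff_eq)
qed

lemma top_module_localization_smul_mem_divisible_subgroup:
  assumes tm: "top_module (localization S) smul" and "1 \<in> S"
    and zero: "0 \<in> A" and add: "\<And>x y. x \<in> A \<Longrightarrow> y \<in> A \<Longrightarrow> x + y \<in> A"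
    and uminus: "\<And>x. x \<in> A \<Longrightarrow> - x \<in> A"
    and divisible: "\<And>s x. s \<in> S \<Longrightarrow> s \<noteq> 0 \<Longrightarrow> x \<in> A \<Longrightarrow> \<exists>y\<in>A. smul (of_nat s) y = x"
    and q: "q \<in> localization S" and "x \<in> A"
  shows "smul q x \<in> A"
proof -
  have int_mem: "smul (of_int k) y \<in> A" if "y \<in> A" for k y
    using top_module_smul_of_int_mem_subgroup[OF tm of_int_in_localization[OF \<open>1 \<in> S\<close>]]
      zero add uminus that by blast
  from q obtain a s where "s \<in> S" and q_eq: "q = of_int a / of_nat s"
    unfolding localization_def by blast
  show ?thesis
  proof (cases "s = 0")
    case True \<comment> \<open>then \<open>q = a / 0 = 0\<close>\<close>
    then show ?thesis using q_eq int_mem[of x 0] \<open>x \<in> A\<close> by simp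
  next
    case False
    then obtain y where "y \<in> A" and x_eq: "smul (of_nat s) y = x"
      using divisible \<open>s \<in> S\<close> \<open>x \<in> A\<close> by blast
    have "smul q x = smul (q * of_nat s) y"
      unfolding x_eq[symmetric]
      by (rule top_module_smul_smul[OF tm q of_nat_in_localization[OF \<open>1 \<in> S\<close>]])
    also have "q * of_nat s = of_int a"
      using q_eq False by simp
    finally show ?thesis using int_mem[OF \<open>y \<in> A\<close>] by simp
  qed
qed

lemma sum_const_Pair_zero:
  "(\<Sum>i<n. (w :: 'a::real_vector, 0 :: 'b::ab_group_add)) = (real n *\<^sub>R w, 0)"
  by (induction n) (auto simp: algebra_simps zero_prod_def)

lemma top_module_smul_Pair_zero_divisible:
  fixes smul :: "rat \<Rightarrow> 'a::real_normed_vector \<times> 'b::{topological_space,ab_group_add} \<Rightarrow> 'a \<times> 'b"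
  assumes "top_module R smul" "\<And>n. of_nat n \<in> R" "s \<noteq> 0"
  shows "smul (of_nat s) ((1 / real s) *\<^sub>R v, 0) = (v, 0)"
  using assms by (simp add: top_module_smul_of_nat sum_const_Pair_zero)

theorem mainTheorem19:
  fixes \<Sigma> :: "nat set"
    and smul :: "rat \<Rightarrow> (real ^ 'n) \<times> ('h::{t2_space, topological_ab_group_add}) \<Rightarrow> (real ^ 'n) \<times> 'h"
  assumes "\<forall>p\<in>\<Sigma>. prime p"
    and "locally compact (UNIV :: 'h set)"
    and "\<exists>K :: 'h set. compact K \<and> open K \<and> 0 \<in> K \<and> (\<forall>x\<in>K. \<forall>y\<in>K. x + y \<in> K \<and> - x \<in> K)"
    and "top_module (localization (gen_monoid \<Sigma>)) smul"
  shows "closed (range (\<lambda>v::real ^ 'n. (v, 0::'h))) \<and>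
         (\<forall>q\<in>localization (gen_monoid \<Sigma>). \<forall>v::real ^ 'n. smul q (v, 0) \<in> range (\<lambda>w. (w, 0))) \<and>
         (\<forall>q\<in>localization (gen_monoid \<Sigma>). \<forall>x y. snd x = snd y \<longrightarrow> snd (smul q x) = snd (smul q y))"
proof -
  let ?A = "range (\<lambda>v::real ^ 'n. (v, 0::'h))"
  note tm = assms(4)
  note one = gen_monoid.one[of \<Sigma>]
  have "?A = UNIV \<times> {0}" by auto
  then have "closed ?A" by (simp add: closed_Times)
  moreover have stable: "smul q x \<in> ?A" if "q \<in> localization (gen_monoid \<Sigma>)" "x \<in> ?A" for q x
  proof (rule top_module_localization_smul_mem_divisible_subgroup[OF tm one _ _ _ _ that])
    fix s :: nat and x assume "s \<noteq> 0" "x \<in> ?A"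
    then show "\<exists>y\<in>?A. smul (of_nat s) y = x"
      using top_module_smul_Pair_zero_divisible[OF tm of_nat_in_localization[OF one]] by blast
  qed (force simp: zero_prod_def)+
  moreover have "snd (smul q x) = snd (smul q y)"
    if q: "q \<in> localization (gen_monoid \<Sigma>)" and "snd x = snd y" for q and x y :: "(real ^ 'n) \<times> 'h"
  proof -
    have "x - y \<in> ?A"
      using \<open>snd x = snd y\<close> by (intro image_eqI[of _ _ "fst x - fst y"]) (auto simp: prod_eq_iff)
    then have "smul q x - smul q y \<in> ?A" using stable[OF q] top_module_smul_diff[OF tm q] by metis
    then show ?thesis by (auto simp: prod_eq_iff)
  qed
  ultimately show ?thesis by blast
qed

end
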